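(* Let $n\ge 6$, $p\in(0,1)$. The mean sum of squared linking numbers of a random linear embedding of an $(n,p)$-graph equals $$\frac{q}{16}\sum_{i=6}^{n}p^i\,\frac{n!}{(n-i)!}\,(i-5),$$ where $q$ is the constant defined in the context.
   Context: An $(n,p)$-graph is a random graph on $n$ vertices in which each pair of vertices is joined by an edge independently with probability $p$; in a random linear embedding its vertices are independent uniform points of $C^3=[0,1]^3$ (independent of edge choices) and edges are straight segments. The mean sum of squared linking numbers is $E\big[\sum \mathrm{lk}(C,C')^2\big]$, the sum over unordered pairs of vertex-disjoint cycles of the embedded graph. For oriented segments $l,l'$, $\epsilon(l,l')$ is the signed crossing in orthogonal projection onto a fixed plane ($0$ if no crossing, else $\pm1$ by the right-hand rule). With $A,B,C,P,Q,R$ independent uniform points of $C^3$ and $X\to Y$ the segment oriented from $X$ to $Y$: $2s=P(\epsilon(A\to B,P\to Q)\ne0)$, $u=E[\epsilon(A\to B,P\to Q)\epsilon(A\to B,Q\to R)]$, $v=E[\epsilon(A\to B,P\to Q)\epsilon(B\to C,Q\to R)]$, $q=s+2(u+v)>0$. *)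

theory Defs
  imports "HOL-Probability.Probability"
begin

type_synonym point = "real^3"

definition cube_unif :: "point measure" where
  "cube_unif = uniform_measure lborel (cbox 0 1)"

text \<open>2D cross product of the projections onto the xy-plane (the fixed projection plane,
  viewed from z = +infinity).\<close>
definition cross2 :: "point \<Rightarrow> point \<Rightarrow> real" where
  "cross2 x y = x$1 * y$2 - x$2 * y$1"

text \<open>Signed crossing eps(a->b, p->q) of the oriented segments a->b and p->q in the
  orthogonal projection onto the xy-plane: 0 if the projections do not cross (at interior
  points), otherwise +1/-1 by the right-hand rule (sign of cross2 (over) (under)).\<close>
definition eps :: "point \<Rightarrow> point \<Rightarrow> point \<Rightarrow> point \<Rightarrow> real" where
  "eps a b p q =
    (let d1 = b - a; d2 = q - p; D = cross2 d1 d2 in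
     if D = 0 then 0 else
     (let t = cross2 (p - a) d2 / D; s = cross2 (p - a) d1 / D in
      if 0 < t \<and> t < 1 \<and> 0 < s \<and> s < 1 then
        (let z1 = a$3 + t * d1$3; z2 = p$3 + s * d2$3 in
         if z1 > z2 then sgn D else if z1 < z2 then - sgn D else 0)
      else 0))"

text \<open>Six independent uniform points A,B,C,P,Q,R = x 0, ..., x 5.\<close>
definition six_pts :: "(nat \<Rightarrow> point) measure" where
  "six_pts = PiM {..<6} (\<lambda>_. cube_unif)"

definition const_s :: real where
  "const_s = measure six_pts {x \<in> space six_pts. eps (x 0) (x 1) (x 3) (x 4) \<noteq> 0} / 2"

definition const_u :: real where
  "const_u = (\<integral>x. eps (x 0) (x 1) (x 3) (x 4) * eps (x 0) (x 1) (x 4) (x 5) \<partial>six_pts)"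

definition const_v :: real where
  "const_v = (\<integral>x. eps (x 0) (x 1) (x 3) (x 4) * eps (x 1) (x 2) (x 4) (x 5) \<partial>six_pts)"

definition const_q :: real where
  "const_q = const_s + 2 * (const_u + const_v)"

definition all_edges :: "nat \<Rightarrow> nat set set" where
  "all_edges n = {{i, j} | i j. i < n \<and> j < n \<and> i \<noteq> j}"

definition cyc_edges :: "nat list \<Rightarrow> nat set set" where
  "cyc_edges vs = {{vs ! i, vs ! ((i + 1) mod length vs)} | i. i < length vs}"

definition is_cycle_list :: "nat set set \<Rightarrow> nat list \<Rightarrow> bool" where
  "is_cycle_list G vs \<longleftrightarrow> length vs \<ge> 3 \<and> distinct vs \<and> cyc_edges vs \<subseteq> G"

definition cycles :: "nat set set \<Rightarrow> nat set set set" where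
  "cycles G = {cyc_edges vs | vs. is_cycle_list G vs}"

definition disj_cycle_pairs :: "nat set set \<Rightarrow> (nat set set \<times> nat set set) set" where
  "disj_cycle_pairs G = {(C, C'). C \<in> cycles G \<and> C' \<in> cycles G \<and> \<Union>C \<inter> \<Union>C' = {}}"

definition lk_list :: "(nat \<Rightarrow> point) \<Rightarrow> nat list \<Rightarrow> nat list \<Rightarrow> real" where
  "lk_list pos vs ws = (1/2) * (\<Sum>i<length vs. \<Sum>j<length ws.
      eps (pos (vs ! i)) (pos (vs ! ((i + 1) mod length vs)))
          (pos (ws ! j)) (pos (ws ! ((j + 1) mod length ws))))"

text \<open>An orientation of a cycle given as edge set (the square of lk does not depend on it).\<close>
definition orient :: "nat set set \<Rightarrow> nat list" where
  "orient C = (SOME vs. length vs \<ge> 3 \<and> distinct vs \<and> cyc_edges vs = C)"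

definition lk :: "(nat \<Rightarrow> point) \<Rightarrow> nat set set \<Rightarrow> nat set set \<Rightarrow> real" where
  "lk pos C C' = lk_list pos (orient C) (orient C')"

text \<open>Sum of squared linking numbers over unordered pairs of vertex-disjoint cycles
  (= half the sum over ordered pairs).\<close>
definition sum_sq_lk :: "nat set set \<Rightarrow> (nat \<Rightarrow> point) \<Rightarrow> real" where
  "sum_sq_lk G pos = (1/2) * (\<Sum>(C, C') \<in> disj_cycle_pairs G. (lk pos C C')^2)"

definition mean_sum_sq_lk :: "nat \<Rightarrow> real \<Rightarrow> real" where
  "mean_sum_sq_lk n p =
    (\<Sum>G \<in> Pow (all_edges n).
       p ^ card G * (1 - p) ^ (card (all_edges n) - card G) *
       (\<integral>pos. sum_sq_lk G pos \<partial>(PiM {..<n} (\<lambda>_. cube_unif))))"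

end

theory Submission
  imports Defs
begin

text \<open>Writing lk(C, C')^2 as a fourfold sum of products of signed crossings of edges, the
  expected product of the crossings of edges e, f with edges e', f' vanishes unless e' is e or
  adjacent to it in C and f' is f or adjacent to it in C': otherwise exchanging the positions of
  the two endpoints of e' (or f') reverses one segment and fixes the rest. The nine surviving
  patterns contribute 2s + 4u + 4v = 2q, so E[lk(C, C')^2] = q |C| |C'| / 2. A given pair of
  disjoint cycles lies in the random graph with probability p^(|C| + |C'|). Finally, a k-cycle
  of the complete graph corresponds to 2k vertex lists, and concatenating the lists of two disjoint
  cycles gives a list of i distinct vertices with one of i - 5 admissible cut points; there are
  n!/(n - i)! such lists.\<close>

lemma prob_space_cube_unif: "prob_space cube_unif"
proof -
  have "(\<Prod>b\<in>Basis. (1::real^3) \<bullet> b) = 1"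
    by (rule prod.neutral) (auto simp: Basis_vec_def inner_axis)
  then show ?thesis
    unfolding cube_unif_def
    by (intro prob_space_uniform_measure) (auto simp: emeasure_lborel_cbox_eq Basis_vec_def inner_axis)
qed

lemma sets_cube_unif [measurable_cong, simp]: "sets cube_unif = sets borel"
  unfolding cube_unif_def by simp

lemma borel_measurable_vec_nth [measurable]: "(\<lambda>x::real^3. x $ i) \<in> borel_measurable borel"
  by (intro borel_measurable_continuous_onI continuous_intros)

lemma borel_measurable_cross2 [measurable]:
  assumes [measurable]: "f \<in> borel_measurable M" "g \<in> borel_measurable M"
  shows "(\<lambda>x. cross2 (f x) (g x)) \<in> borel_measurable M"
  unfolding cross2_def by measurable

lemma borel_measurable_eps [measurable]:
  assumes [measurable]: "a \<in> borel_measurable M" "b \<in> borel_measurable M"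
    "c \<in> borel_measurable M" "d \<in> borel_measurable M"
  shows "(\<lambda>x. eps (a x) (b x) (c x) (d x)) \<in> borel_measurable M"
  unfolding eps_def Let_def by measurable

lemma eps_values: "eps a b c d \<in> {-1, 0, 1}"
  unfolding eps_def Let_def by (auto simp: sgn_if)

lemma abs_eps_le_one: "\<bar>eps a b c d\<bar> \<le> 1"
  using eps_values[of a b c d] by auto

lemma eps_squared: "(eps a b c d)\<^sup>2 = (if eps a b c d \<noteq> 0 then 1 else 0)"
  using eps_values[of a b c d] by auto

lemma eps_reverse_first: "eps b a c d = - eps a b c d"
proof -
  define D where "D = cross2 (b - a) (d - c)"
  define t where "t = cross2 (c - a) (d - c) / D"
  define s where "s = cross2 (c - a) (b - a) / D"
  have D': "cross2 (a - b) (d - c) = - D" by (simp add: D_def cross2_def algebra_simps)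
  show ?thesis
  proof (cases "D = 0")
    case True
    then show ?thesis unfolding eps_def Let_def D' by (simp add: D_def)
  next
    case False
    \<comment> \<open>reversing the first segment maps its crossing parameter t to 1 - t and keeps the crossing point\<close>
    have t': "cross2 (c - b) (d - c) / (- D) = 1 - t"
      using False by (simp add: t_def D_def cross2_def field_simps)
    have s': "cross2 (c - b) (a - b) / (- D) = s"
      using False by (simp add: s_def D_def cross2_def field_simps)
    have z: "b$3 + (1 - t) * (a - b)$3 = a$3 + t * (b - a)$3"
      by (simp add: algebra_simps)
    have "(0 < 1 - t \<and> 1 - t < 1) = (0 < t \<and> t < 1)" by auto
    then show ?thesis
      unfolding eps_def Let_def D' t' s' z
      unfolding D_def[symmetric] t_def[symmetric] s_def[symmetric]
      using False by (auto simp: sgn_if)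
  qed
qed

lemma eps_commute: "eps c d a b = eps a b c d"
proof -
  define D where "D = cross2 (b - a) (d - c)"
  define t where "t = cross2 (c - a) (d - c) / D"
  define s where "s = cross2 (c - a) (b - a) / D"
  have D': "cross2 (d - c) (b - a) = - D" by (simp add: D_def cross2_def algebra_simps)
  show ?thesis
  proof (cases "D = 0")
    case True
    then show ?thesis unfolding eps_def Let_def D' by (simp add: D_def)
  next
    case False
    \<comment> \<open>exchanging the segments negates D and swaps the crossing parameters t and s\<close>
    have t': "cross2 (a - c) (b - a) / (- D) = s"
      using False by (simp add: s_def D_def cross2_def field_simps)
    have s': "cross2 (a - c) (d - c) / (- D) = t"
      using False by (simp add: t_def D_def cross2_def field_simps)
    show ?thesis
      unfolding eps_def Let_def D' t' s'
      unfolding D_def[symmetric] t_def[symmetric] s_def[symmetric]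
      using False by (auto simp: sgn_if)
  qed
qed

lemma eps_reverse_second: "eps a b d c = - eps a b c d"
  by (metis eps_commute eps_reverse_first)

abbreviation cube_PiM :: "nat set \<Rightarrow> (nat \<Rightarrow> point) measure" where
  "cube_PiM I \<equiv> PiM I (\<lambda>_. cube_unif)"

lemma prob_space_cube_PiM: "prob_space (cube_PiM I)"
  by (intro prob_space_PiM prob_space_cube_unif)

lemma borel_measurable_cube_PiM_component [measurable]:
  "(\<lambda>\<omega>. \<omega> m) \<in> borel_measurable (cube_PiM I)"
proof (cases "m \<in> I")
  case True
  then show ?thesis by measurable
next
  case False
  \<comment> \<open>configurations are extensional, so off I they are constantly undefined\<close>
  then have "\<omega> m = undefined" if "\<omega> \<in> space (cube_PiM I)" for \<omega>
    using that by (auto simp: space_PiM PiE_def extensional_def)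
  then show ?thesis
    by (subst measurable_cong[where g = "\<lambda>_. undefined"]) auto
qed

lemma integrable_eps_product:
  "integrable (cube_PiM I)
     (\<lambda>\<omega>. eps (\<omega> a) (\<omega> b) (\<omega> c) (\<omega> d) * eps (\<omega> a') (\<omega> b') (\<omega> c') (\<omega> d'))"
proof -
  interpret prob_space "cube_PiM I" by (rule prob_space_cube_PiM)
  show ?thesis
  proof (rule integrable_const_bound[where B = 1])
    show "AE \<omega> in cube_PiM I. norm (eps (\<omega> a) (\<omega> b) (\<omega> c) (\<omega> d) * eps (\<omega> a') (\<omega> b') (\<omega> c') (\<omega> d')) \<le> 1"
      by (intro AE_I2) (auto simp: abs_mult intro!: mult_le_one abs_eps_le_one)
  qed measurable
qed

lemma integral_cube_PiM_reindex:
  fixes G :: "(nat \<Rightarrow> point) \<Rightarrow> real"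
  assumes "inj_on t J" "t \<in> J \<rightarrow> K" "G \<in> borel_measurable (cube_PiM J)"
  shows "(\<integral>\<omega>. G (\<lambda>j\<in>J. \<omega> (t j)) \<partial>cube_PiM K) = (\<integral>x. G x \<partial>cube_PiM J)"
proof -
  have meas: "(\<lambda>\<omega>. \<lambda>j\<in>J. \<omega> (t j)) \<in> measurable (cube_PiM K) (cube_PiM J)"
    using assms(2) by (intro measurable_restrict measurable_component_singleton) auto
  have "distr (cube_PiM K) (cube_PiM J) (\<lambda>\<omega>. \<lambda>j\<in>J. \<omega> (t j)) = cube_PiM J"
    using distr_PiM_reindex[of K "\<lambda>_. cube_unif" t J] assms prob_space_cube_unif by simp
  then show ?thesis
    using integral_distr[OF meas assms(3)] by simp
qed

lemma integral_cube_PiM_as_six_pts: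
  fixes G F H :: "(nat \<Rightarrow> point) \<Rightarrow> real"
  assumes "J \<subseteq> {..<6}" "inj_on ((!) L) J" "set L \<subseteq> {..<n}" "length L = 6"
    "G \<in> borel_measurable (cube_PiM J)"
    "\<And>\<omega>. F \<omega> = G (\<lambda>j\<in>J. \<omega> (L ! j))" "\<And>x. H x = G (restrict x J)"
  shows "(\<integral>\<omega>. F \<omega> \<partial>cube_PiM {..<n}) = (\<integral>x. H x \<partial>six_pts)"
proof -
  have "(!) L \<in> J \<rightarrow> {..<n}"
    using assms(1,4) by (auto intro!: nth_mem[THEN subsetD[OF assms(3)]])
  then have "(\<integral>\<omega>. F \<omega> \<partial>cube_PiM {..<n}) = (\<integral>x. G x \<partial>cube_PiM J)"
    using integral_cube_PiM_reindex[OF assms(2) _ assms(5)] assms(6) by simp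
  also have "\<dots> = (\<integral>\<omega>. G (\<lambda>j\<in>J. \<omega> (id j)) \<partial>cube_PiM {..<6})"
    using assms(1,5) by (intro integral_cube_PiM_reindex[symmetric]) auto
  finally show ?thesis
    unfolding six_pts_def restrict_def id_def assms(7) by simp
qed

lemma integral_eps_squared:
  assumes "distinct [a, b, c, d]" "set [a, b, c, d] \<subseteq> {..<n}"
  shows "(\<integral>\<omega>. (eps (\<omega> a) (\<omega> b) (\<omega> c) (\<omega> d))\<^sup>2 \<partial>cube_PiM {..<n}) = 2 * const_s"
proof -
  interpret prob_space six_pts unfolding six_pts_def by (rule prob_space_cube_PiM)
  let ?A = "{x \<in> space six_pts. eps (x 0) (x 1) (x 3) (x 4) \<noteq> 0}"
  have "?A \<in> sets six_pts" unfolding six_pts_def by measurable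
  then have "(\<integral>x. (eps (x 0) (x 1) (x 3) (x 4))\<^sup>2 \<partial>six_pts) = measure six_pts ?A"
    by (subst Bochner_Integration.integral_cong[where g = "indicator ?A"]) (auto simp: eps_squared indicator_def)
  moreover have "(\<integral>\<omega>. (eps (\<omega> a) (\<omega> b) (\<omega> c) (\<omega> d))\<^sup>2 \<partial>cube_PiM {..<n})
      = (\<integral>x. (eps (x 0) (x 1) (x 3) (x 4))\<^sup>2 \<partial>six_pts)"
    by (rule integral_cube_PiM_as_six_pts[where J = "{0, 1, 3, 4}" and L = "[a, b, a, c, d, a]"
          and G = "\<lambda>y. (eps (y 0) (y 1) (y 3) (y 4))\<^sup>2"])
      (use assms in \<open>auto simp: inj_on_def\<close>)
  ultimately show ?thesis unfolding const_s_def by simp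
qed

lemma integral_eps_shared_edge:
  assumes "distinct [a, b, c, d, e]" "set [a, b, c, d, e] \<subseteq> {..<n}"
  shows "(\<integral>\<omega>. eps (\<omega> a) (\<omega> b) (\<omega> c) (\<omega> d) * eps (\<omega> a) (\<omega> b) (\<omega> d) (\<omega> e) \<partial>cube_PiM {..<n})
    = const_u"
  unfolding const_u_def
  by (rule integral_cube_PiM_as_six_pts[where J = "{0, 1, 3, 4, 5}" and L = "[a, b, a, c, d, e]"
        and G = "\<lambda>y. eps (y 0) (y 1) (y 3) (y 4) * eps (y 0) (y 1) (y 4) (y 5)"])
    (use assms in \<open>auto simp: inj_on_def\<close>)

lemma integral_eps_consecutive_edges:
  assumes "distinct [a, b, c, d, e, f]" "set [a, b, c, d, e, f] \<subseteq> {..<n}"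
  shows "(\<integral>\<omega>. eps (\<omega> a) (\<omega> b) (\<omega> d) (\<omega> e) * eps (\<omega> b) (\<omega> c) (\<omega> e) (\<omega> f) \<partial>cube_PiM {..<n})
    = const_v"
  unfolding const_v_def
  by (rule integral_cube_PiM_as_six_pts[where J = "{0, 1, 2, 3, 4, 5}" and L = "[a, b, c, d, e, f]"
        and G = "\<lambda>y. eps (y 0) (y 1) (y 3) (y 4) * eps (y 1) (y 2) (y 4) (y 5)"])
    (use assms in \<open>auto simp: inj_on_def\<close>)

lemma integral_cube_PiM_transpose_antisym:
  fixes F :: "(nat \<Rightarrow> point) \<Rightarrow> real"
  assumes "a < n" "b < n" "F \<in> borel_measurable (cube_PiM {..<n})"
    and antisym: "\<And>\<omega>. F (\<lambda>m\<in>{..<n}. \<omega> (Transposition.transpose a b m)) = - F \<omega>"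
  shows "(\<integral>\<omega>. F \<omega> \<partial>cube_PiM {..<n}) = 0"
proof -
  have "Transposition.transpose a b \<in> {..<n} \<rightarrow> {..<n}"
    using assms(1,2) by (auto simp: Transposition.transpose_def)
  then have "(\<integral>\<omega>. F (\<lambda>m\<in>{..<n}. \<omega> (Transposition.transpose a b m)) \<partial>cube_PiM {..<n})
      = (\<integral>\<omega>. F \<omega> \<partial>cube_PiM {..<n})"
    by (intro integral_cube_PiM_reindex assms(3)) auto
  then show ?thesis unfolding antisym by simp
qed

text \<open>Exchanging the positions of the endpoints of a segment that shares no vertex with the
  other three segments reverses it and fixes the others, so the expected product vanishes.\<close>
lemma integral_eps_product_isolated_edge:
  assumes "set [a, b, c, d, a', b', c', d'] \<subseteq> {..<n}"
    and "{a, b} \<inter> {c, d, a', b', c', d'} = {}"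
  shows "(\<integral>\<omega>. eps (\<omega> a) (\<omega> b) (\<omega> c) (\<omega> d) * eps (\<omega> a') (\<omega> b') (\<omega> c') (\<omega> d')
    \<partial>cube_PiM {..<n}) = 0"
proof (rule integral_cube_PiM_transpose_antisym[of a n b])
  show "a < n" "b < n"
    using assms(1) by auto
  show "(\<lambda>\<omega>. eps (\<omega> a) (\<omega> b) (\<omega> c) (\<omega> d) * eps (\<omega> a') (\<omega> b') (\<omega> c') (\<omega> d'))
      \<in> borel_measurable (cube_PiM {..<n})"
    by measurable
  fix \<omega> :: "nat \<Rightarrow> point"
  let ?\<omega>' = "\<lambda>m\<in>{..<n}. \<omega> (Transposition.transpose a b m)"
  have "?\<omega>' a = \<omega> b" "?\<omega>' b = \<omega> a"
    "?\<omega>' c = \<omega> c" "?\<omega>' d = \<omega> d" "?\<omega>' a' = \<omega> a'" "?\<omega>' b' = \<omega> b'" "?\<omega>' c' = \<omega> c'" "?\<omega>' d' = \<omega> d'"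
    using assms by auto
  then show "eps (?\<omega>' a) (?\<omega>' b) (?\<omega>' c) (?\<omega>' d) * eps (?\<omega>' a') (?\<omega>' b') (?\<omega>' c') (?\<omega>' d')
      = - (eps (\<omega> a) (\<omega> b) (\<omega> c) (\<omega> d) * eps (\<omega> a') (\<omega> b') (\<omega> c') (\<omega> d'))"
    by (simp only: eps_reverse_first[of "\<omega> b" "\<omega> a"] mult_minus_left)
qed

text \<open>For edges ab and pq of two disjoint cycles with paths z a b c and w p q r through them,
  these are the nine products of crossings that do not vanish in expectation.\<close>
lemma integral_eps_products_around_crossing:
  assumes "distinct [z, a, b]" "distinct [a, b, c]" "distinct [w, p, q]" "distinct [p, q, r]"
    and "set [z, a, b, c] \<inter> set [w, p, q, r] = {}"
    and "set [z, a, b, c, w, p, q, r] \<subseteq> {..<n}"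
  shows "(\<Sum>(x, y)\<in>{(z, a), (a, b), (b, c)}. \<Sum>(x', y')\<in>{(w, p), (p, q), (q, r)}.
      \<integral>\<omega>. eps (\<omega> a) (\<omega> b) (\<omega> p) (\<omega> q) * eps (\<omega> x) (\<omega> y) (\<omega> x') (\<omega> y') \<partial>cube_PiM {..<n})
    = 2 * const_q"
proof -
  let ?I = "\<lambda>F. \<integral>\<omega>. F \<omega> \<partial>cube_PiM {..<n}"
  let ?e = "\<lambda>\<omega> x y x' y'. eps (\<omega> x) (\<omega> y) (\<omega> x') (\<omega> y')"
  have ab_pq: "?I (\<lambda>\<omega>. ?e \<omega> a b p q * ?e \<omega> a b p q) = 2 * const_s"
    by (subst power2_eq_square[symmetric], rule integral_eps_squared) (use assms in auto)
  have ab_qr: "?I (\<lambda>\<omega>. ?e \<omega> a b p q * ?e \<omega> a b q r) = const_u"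
    by (rule integral_eps_shared_edge) (use assms in auto)
  have ab_wp: "?I (\<lambda>\<omega>. ?e \<omega> a b p q * ?e \<omega> a b w p) = const_u"
    by (subst mult.commute, rule integral_eps_shared_edge) (use assms in auto)
  have bc_pq: "?I (\<lambda>\<omega>. ?e \<omega> a b p q * ?e \<omega> b c p q) = const_u"
  proof -
    have "?e \<omega> a b p q * ?e \<omega> b c p q = ?e \<omega> p q a b * ?e \<omega> p q b c" for \<omega>
      by (simp only: eps_commute[of "\<omega> p" "\<omega> q"])
    moreover have "?I (\<lambda>\<omega>. ?e \<omega> p q a b * ?e \<omega> p q b c) = const_u"
      by (rule integral_eps_shared_edge) (use assms in auto)
    ultimately show ?thesis by simp
  qed
  have za_pq: "?I (\<lambda>\<omega>. ?e \<omega> a b p q * ?e \<omega> z a p q) = const_u"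
  proof -
    have "?e \<omega> a b p q * ?e \<omega> z a p q = ?e \<omega> p q z a * ?e \<omega> p q a b" for \<omega>
      by (simp only: eps_commute[of "\<omega> p" "\<omega> q"] mult.commute)
    moreover have "?I (\<lambda>\<omega>. ?e \<omega> p q z a * ?e \<omega> p q a b) = const_u"
      by (rule integral_eps_shared_edge) (use assms in auto)
    ultimately show ?thesis by simp
  qed
  have bc_qr: "?I (\<lambda>\<omega>. ?e \<omega> a b p q * ?e \<omega> b c q r) = const_v"
    by (rule integral_eps_consecutive_edges) (use assms in auto)
  have bc_wp: "?I (\<lambda>\<omega>. ?e \<omega> a b p q * ?e \<omega> b c w p) = const_v"
  proof -
    have "?e \<omega> a b p q * ?e \<omega> b c w p = ?e \<omega> a b q p * ?e \<omega> b c p w" for \<omega>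
      by (simp only: eps_reverse_second[of "\<omega> a" "\<omega> b" "\<omega> q" "\<omega> p"]
          eps_reverse_second[of "\<omega> b" "\<omega> c" "\<omega> p" "\<omega> w"] minus_mult_minus)
    moreover have "?I (\<lambda>\<omega>. ?e \<omega> a b q p * ?e \<omega> b c p w) = const_v"
      by (rule integral_eps_consecutive_edges) (use assms in auto)
    ultimately show ?thesis by simp
  qed
  have za_qr: "?I (\<lambda>\<omega>. ?e \<omega> a b p q * ?e \<omega> z a q r) = const_v"
  proof -
    have "?e \<omega> a b p q * ?e \<omega> z a q r = ?e \<omega> z a r q * ?e \<omega> a b q p" for \<omega>
      by (simp only: eps_reverse_second[of "\<omega> a" "\<omega> b" "\<omega> q" "\<omega> p"]
          eps_reverse_second[of "\<omega> z" "\<omega> a" "\<omega> r" "\<omega> q"] minus_mult_minus mult.commute)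
    moreover have "?I (\<lambda>\<omega>. ?e \<omega> z a r q * ?e \<omega> a b q p) = const_v"
      by (rule integral_eps_consecutive_edges) (use assms in auto)
    ultimately show ?thesis by simp
  qed
  have za_wp: "?I (\<lambda>\<omega>. ?e \<omega> a b p q * ?e \<omega> z a w p) = const_v"
    by (subst mult.commute, rule integral_eps_consecutive_edges) (use assms in auto)
  have "(z, a) \<notin> {(a, b), (b, c)}" "(a, b) \<noteq> (b, c)"
    "(w, p) \<notin> {(p, q), (q, r)}" "(p, q) \<noteq> (q, r)"
    using assms(1-4) by auto
  then show ?thesis
    by (simp add: ab_pq ab_qr ab_wp bc_pq za_pq bc_qr bc_wp za_qr za_wp const_q_def)
qed

definition cnext :: "nat \<Rightarrow> nat \<Rightarrow> nat" where
  "cnext k i = (i + 1) mod k"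

definition cprev :: "nat \<Rightarrow> nat \<Rightarrow> nat" where
  "cprev k i = (i + k - 1) mod k"

lemma cnext_eq:
  assumes "i < k"
  shows "cnext k i = (if i + 1 < k then i + 1 else 0)"
proof (cases "i + 1 < k")
  case False
  with assms have "i + 1 = k" by simp
  then show ?thesis by (simp add: cnext_def)
qed (simp add: cnext_def)

lemma cprev_eq: "i < k \<Longrightarrow> cprev k i = (if i = 0 then k - 1 else i - 1)"
proof (cases "i = 0")
  case False
  assume "i < k"
  then have "i + k - 1 = (i - 1) + k"
    using False by simp
  then have "cprev k i = ((i - 1) + k) mod k"
    unfolding cprev_def by (rule arg_cong)
  also have "\<dots> = i - 1"
    using \<open>i < k\<close> by (simp only: mod_add_self2) simp
  finally show ?thesis using False by simp
qed (simp add: cprev_def)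

context
  fixes k :: nat
  assumes k: "3 \<le> k"
begin

lemma cnext_less: "cnext k i < k"
  using k unfolding cnext_def by simp

lemma cprev_less: "cprev k i < k"
  using k unfolding cprev_def by simp

lemma cnext_cprev: "i < k \<Longrightarrow> cnext k (cprev k i) = i"
  using k by (simp add: cnext_eq cprev_eq cprev_less; arith)

lemma cprev_cnext: "i < k \<Longrightarrow> cprev k (cnext k i) = i"
  using k by (simp add: cnext_eq cprev_eq cnext_less; arith)

lemma cnext_neq: "i < k \<Longrightarrow> cnext k i \<noteq> i"
  using k by (simp add: cnext_eq; arith)

lemma cprev_neq: "i < k \<Longrightarrow> cprev k i \<noteq> i"
  using k by (simp add: cprev_eq; arith)

lemma cnext_cnext_neq: "i < k \<Longrightarrow> cnext k (cnext k i) \<noteq> i"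
  using k by (simp add: cnext_eq cnext_less; arith)

lemma cprev_neq_cnext: "i < k \<Longrightarrow> cprev k i \<noteq> cnext k i"
  using k by (simp add: cnext_eq cprev_eq; arith)

lemma cnext_inject: "i < k \<Longrightarrow> j < k \<Longrightarrow> cnext k i = cnext k j \<longleftrightarrow> i = j"
  by (metis cprev_cnext)

end

lemma nth_cyclic_edges_disjoint:
  assumes "distinct us" "3 \<le> length us" "i < length us" "i' < length us"
    and "i' \<notin> {cprev (length us) i, i, cnext (length us) i}"
  shows "{us ! i, us ! cnext (length us) i} \<inter> {us ! i', us ! cnext (length us) i'} = {}"
proof -
  let ?k = "length us"
  have "i' \<noteq> i" "i' \<noteq> cnext ?k i"
    using assms(5) by auto
  moreover have "cnext ?k i' \<noteq> i"
    using cprev_cnext[OF assms(2,4)] assms(5) by auto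
  moreover have "cnext ?k i' \<noteq> cnext ?k i"
    using cnext_inject[OF assms(2,4,3)] assms(5) by auto
  ultimately show ?thesis
    using assms(1,3,4) cnext_less[OF assms(2)] by (auto simp: nth_eq_iff_index_eq)
qed

lemma nth_around_cyclic_edge:
  assumes "distinct us" "3 \<le> length us" "i < length us"
  shows "distinct [us ! cprev (length us) i, us ! i, us ! cnext (length us) i]"
    "distinct [us ! i, us ! cnext (length us) i, us ! cnext (length us) (cnext (length us) i)]"
    "{us ! cprev (length us) i, us ! i, us ! cnext (length us) i,
      us ! cnext (length us) (cnext (length us) i)} \<subseteq> set us"
proof -
  let ?k = "length us"
  have idx: "cprev ?k i < ?k" "cnext ?k i < ?k" "cnext ?k (cnext ?k i) < ?k"
    using cnext_less cprev_less assms(2) by auto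
  have ne: "cprev ?k i \<noteq> i" "cnext ?k i \<noteq> i" "cprev ?k i \<noteq> cnext ?k i"
    "cnext ?k (cnext ?k i) \<noteq> i" "cnext ?k (cnext ?k i) \<noteq> cnext ?k i"
    using cprev_neq cnext_neq cprev_neq_cnext cnext_cnext_neq idx assms(2,3) by auto
  show "distinct [us ! cprev ?k i, us ! i, us ! cnext ?k i]"
    "distinct [us ! i, us ! cnext ?k i, us ! cnext ?k (cnext ?k i)]"
    using assms(1,3) idx ne ne[THEN not_sym] by (auto simp: nth_eq_iff_index_eq)
  show "{us ! cprev ?k i, us ! i, us ! cnext ?k i, us ! cnext ?k (cnext ?k i)} \<subseteq> set us"
    using assms(3) idx by auto
qed

definition edge_crossing :: "(nat \<Rightarrow> point) \<Rightarrow> nat list \<Rightarrow> nat list \<Rightarrow> nat \<Rightarrow> nat \<Rightarrow> real" where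
  "edge_crossing pos vs ws i j =
    eps (pos (vs ! i)) (pos (vs ! cnext (length vs) i)) (pos (ws ! j)) (pos (ws ! cnext (length ws) j))"

lemma lk_list_squared:
  "(lk_list pos vs ws)\<^sup>2 = 1/4 * (\<Sum>i<length vs. \<Sum>j<length ws. \<Sum>i'<length vs. \<Sum>j'<length ws.
     edge_crossing pos vs ws i j * edge_crossing pos vs ws i' j')"
proof -
  have lk: "lk_list pos vs ws = 1/2 * (\<Sum>i<length vs. \<Sum>j<length ws. edge_crossing pos vs ws i j)"
    unfolding lk_list_def edge_crossing_def cnext_def by simp
  have prod: "(\<Sum>i<length vs. \<Sum>j<length ws. edge_crossing pos vs ws i j)
      * (\<Sum>i'<length vs. \<Sum>j'<length ws. edge_crossing pos vs ws i' j')
    = (\<Sum>i<length vs. \<Sum>j<length ws. \<Sum>i'<length vs. \<Sum>j'<length ws.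
      edge_crossing pos vs ws i j * edge_crossing pos vs ws i' j')"
    unfolding sum_product by (rule sum.cong[OF refl], rule sum.swap)
  show ?thesis
    unfolding lk power2_eq_square prod[symmetric] by (simp add: field_simps)
qed

lemma integrable_edge_crossing_product:
  "integrable (cube_PiM I) (\<lambda>\<omega>. edge_crossing \<omega> vs ws i j * edge_crossing \<omega> vs ws i' j')"
  unfolding edge_crossing_def by (rule integrable_eps_product)

locale disjoint_cycle_lists =
  fixes n :: nat and vs ws :: "nat list"
  assumes distinct_vs: "distinct vs" and distinct_ws: "distinct ws"
    and length_vs: "3 \<le> length vs" and length_ws: "3 \<le> length ws"
    and disjoint: "set vs \<inter> set ws = {}"
    and set_vs: "set vs \<subseteq> {..<n}" and set_ws: "set ws \<subseteq> {..<n}"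
begin

lemma integral_edge_crossing_product_nonadjacent:
  assumes "i < length vs" "j < length ws" "i' < length vs" "j' < length ws"
    and "i' \<notin> {cprev (length vs) i, i, cnext (length vs) i}
      \<or> j' \<notin> {cprev (length ws) j, j, cnext (length ws) j}"
  shows "(\<integral>\<omega>. edge_crossing \<omega> vs ws i j * edge_crossing \<omega> vs ws i' j' \<partial>cube_PiM {..<n}) = 0"
proof -
  let ?k = "length vs" and ?l = "length ws"
  have mem: "{vs ! i, vs ! cnext ?k i, vs ! i', vs ! cnext ?k i'} \<subseteq> set vs"
    "{ws ! j, ws ! cnext ?l j, ws ! j', ws ! cnext ?l j'} \<subseteq> set ws"
    using assms(1-4) cnext_less[OF length_vs] cnext_less[OF length_ws] by auto
  then have nth_less: "set [vs ! i, vs ! cnext ?k i, ws ! j, ws ! cnext ?l j,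
      vs ! i', vs ! cnext ?k i', ws ! j', ws ! cnext ?l j'] \<subseteq> {..<n}"
    using set_vs set_ws by auto
  have across: "{vs ! i, vs ! cnext ?k i, vs ! i', vs ! cnext ?k i'}
      \<inter> {ws ! j, ws ! cnext ?l j, ws ! j', ws ! cnext ?l j'} = {}"
    using mem disjoint by blast
  from assms(5) show ?thesis
  proof
    assume "i' \<notin> {cprev ?k i, i, cnext ?k i}"
    then have "{vs ! i, vs ! cnext ?k i} \<inter> {vs ! i', vs ! cnext ?k i'} = {}"
      using nth_cyclic_edges_disjoint distinct_vs length_vs assms(1,3) by blast
    then show ?thesis
      unfolding edge_crossing_def
      by (intro integral_eps_product_isolated_edge) (use nth_less across in auto)
  next
    assume "j' \<notin> {cprev ?l j, j, cnext ?l j}"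
    then have "{ws ! j, ws ! cnext ?l j} \<inter> {ws ! j', ws ! cnext ?l j'} = {}"
      using nth_cyclic_edges_disjoint distinct_ws length_ws assms(2,4) by blast
    then show ?thesis
      unfolding edge_crossing_def eps_commute[of _ _ "\<omega> (ws ! j)" for \<omega>]
        eps_commute[of _ _ "\<omega> (ws ! j')" for \<omega>]
      by (intro integral_eps_product_isolated_edge) (use nth_less across in auto)
  qed
qed

lemma integral_edge_crossing_row:
  assumes ij: "i < length vs" "j < length ws"
  shows "(\<Sum>i'<length vs. \<Sum>j'<length ws.
      \<integral>\<omega>. edge_crossing \<omega> vs ws i j * edge_crossing \<omega> vs ws i' j' \<partial>cube_PiM {..<n}) = 2 * const_q"
proof -
  let ?k = "length vs" and ?l = "length ws"
  define T where "T i' j' = (\<integral>\<omega>. edge_crossing \<omega> vs ws i j * edge_crossing \<omega> vs ws i' j'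
    \<partial>cube_PiM {..<n})" for i' j'
  define Si where "Si = {cprev ?k i, i, cnext ?k i}"
  define Sj where "Sj = {cprev ?l j, j, cnext ?l j}"
  define ev where "ev t = (vs ! t, vs ! cnext ?k t)" for t
  define ew where "ew t = (ws ! t, ws ! cnext ?l t)" for t
  have Si: "Si \<subseteq> {..<?k}" and Sj: "Sj \<subseteq> {..<?l}"
    using ij cnext_less cprev_less length_vs length_ws by (auto simp: Si_def Sj_def)
  have "(\<Sum>i'<?k. \<Sum>j'<?l. T i' j') = (\<Sum>(i', j')\<in>{..<?k} \<times> {..<?l}. T i' j')"
    by (simp add: sum.cartesian_product)
  also have "\<dots> = (\<Sum>(i', j')\<in>Si \<times> Sj. T i' j')"
    using Si Sj ij integral_edge_crossing_product_nonadjacent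
    by (intro sum.mono_neutral_right) (auto simp: T_def Si_def Sj_def)
  also have "\<dots> = (\<Sum>i'\<in>Si. \<Sum>j'\<in>Sj. T i' j')"
    by (simp add: sum.cartesian_product)
  also have "\<dots> = (\<Sum>(x, y)\<in>ev ` Si. \<Sum>(x', y')\<in>ew ` Sj.
      \<integral>\<omega>. edge_crossing \<omega> vs ws i j * eps (\<omega> x) (\<omega> y) (\<omega> x') (\<omega> y') \<partial>cube_PiM {..<n})"
  proof -
    have "inj_on ev Si" "inj_on ew Sj"
      using Si Sj distinct_vs distinct_ws
      by (auto simp: inj_on_def ev_def ew_def nth_eq_iff_index_eq subset_iff)
    then show ?thesis
      unfolding sum.reindex[OF \<open>inj_on ev Si\<close>] sum.reindex[OF \<open>inj_on ew Sj\<close>]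
      by (simp add: T_def ev_def ew_def edge_crossing_def)
  qed
  also have "\<dots> = 2 * const_q"
  proof -
    have ev: "ev ` Si = {(vs ! cprev ?k i, vs ! i), (vs ! i, vs ! cnext ?k i),
        (vs ! cnext ?k i, vs ! cnext ?k (cnext ?k i))}"
      using ij cnext_cprev[OF length_vs] by (auto simp: ev_def Si_def)
    have ew: "ew ` Sj = {(ws ! cprev ?l j, ws ! j), (ws ! j, ws ! cnext ?l j),
        (ws ! cnext ?l j, ws ! cnext ?l (cnext ?l j))}"
      using ij cnext_cprev[OF length_ws] by (auto simp: ew_def Sj_def)
    note v = nth_around_cyclic_edge[OF distinct_vs length_vs ij(1)]
      and w = nth_around_cyclic_edge[OF distinct_ws length_ws ij(2)]
    have "set [vs ! cprev ?k i, vs ! i, vs ! cnext ?k i, vs ! cnext ?k (cnext ?k i)]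
        \<inter> set [ws ! cprev ?l j, ws ! j, ws ! cnext ?l j, ws ! cnext ?l (cnext ?l j)] = {}"
      using v(3) w(3) disjoint by auto
    moreover have "set [vs ! cprev ?k i, vs ! i, vs ! cnext ?k i, vs ! cnext ?k (cnext ?k i),
        ws ! cprev ?l j, ws ! j, ws ! cnext ?l j, ws ! cnext ?l (cnext ?l j)] \<subseteq> {..<n}"
      using v(3) w(3) set_vs set_ws by auto
    ultimately show ?thesis
      unfolding ev ew edge_crossing_def by (rule integral_eps_products_around_crossing[OF v(1,2) w(1,2)])
  qed
  finally show ?thesis unfolding T_def .
qed

lemma integral_lk_list_squared:
  "(\<integral>\<omega>. (lk_list \<omega> vs ws)\<^sup>2 \<partial>cube_PiM {..<n}) = const_q / 2 * length vs * length ws"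
proof -
  have "(\<integral>\<omega>. (lk_list \<omega> vs ws)\<^sup>2 \<partial>cube_PiM {..<n}) = 1/4 * (\<Sum>i<length vs. \<Sum>j<length ws.
      \<Sum>i'<length vs. \<Sum>j'<length ws.
        \<integral>\<omega>. edge_crossing \<omega> vs ws i j * edge_crossing \<omega> vs ws i' j' \<partial>cube_PiM {..<n})"
    by (simp add: lk_list_squared Bochner_Integration.integral_sum
        Bochner_Integration.integrable_sum integrable_edge_crossing_product)
  also have "\<dots> = 1/4 * (\<Sum>i<length vs. \<Sum>j<length ws. 2 * const_q)"
    by (auto intro!: sum.cong simp: integral_edge_crossing_row)
  finally show ?thesis by simp
qed

end

lemma integrable_lk_list_squared:
  "integrable (cube_PiM I) (\<lambda>\<omega>. (lk_list \<omega> vs ws)\<^sup>2)"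
  unfolding lk_list_squared
  by (intro integrable_mult_right Bochner_Integration.integrable_sum integrable_edge_crossing_product)

lemma cyc_edges_eq_image:
  "cyc_edges us = (\<lambda>m. {us ! m, us ! cnext (length us) m}) ` {..<length us}"
  unfolding cyc_edges_def cnext_def by auto

lemma card_cyc_edges:
  assumes "distinct us" "3 \<le> length us"
  shows "card (cyc_edges us) = length us"
proof -
  let ?k = "length us"
  have "inj_on (\<lambda>m. {us ! m, us ! cnext ?k m}) {..<?k}"
  proof (rule inj_onI)
    fix m m'
    assume m: "m \<in> {..<?k}" "m' \<in> {..<?k}"
      and "{us ! m, us ! cnext ?k m} = {us ! m', us ! cnext ?k m'}"
    then have "m = m' \<or> (m = cnext ?k m' \<and> cnext ?k m = m')"
      using assms cnext_less[OF assms(2)] by (auto simp: doubleton_eq_iff nth_eq_iff_index_eq)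
    then show "m = m'"
      using cnext_cnext_neq[OF assms(2)] m by auto
  qed
  then show ?thesis
    unfolding cyc_edges_eq_image by (simp add: card_image)
qed

lemma Union_cyc_edges:
  assumes "3 \<le> length us"
  shows "\<Union>(cyc_edges us) = set us"
proof
  show "\<Union>(cyc_edges us) \<subseteq> set us"
    unfolding cyc_edges_eq_image using cnext_less[OF assms] by auto
  show "set us \<subseteq> \<Union>(cyc_edges us)"
    unfolding cyc_edges_eq_image by (auto simp: in_set_conv_nth)
qed

lemma is_cycle_list_all_edges_iff:
  "is_cycle_list (all_edges n) us \<longleftrightarrow> distinct us \<and> 3 \<le> length us \<and> set us \<subseteq> {..<n}"
proof
  assume "is_cycle_list (all_edges n) us"
  then have us: "distinct us" "3 \<le> length us" and "cyc_edges us \<subseteq> all_edges n"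
    unfolding is_cycle_list_def by auto
  then have "\<Union>(cyc_edges us) \<subseteq> {..<n}"
    unfolding all_edges_def by auto
  then show "distinct us \<and> 3 \<le> length us \<and> set us \<subseteq> {..<n}"
    using us Union_cyc_edges by auto
next
  assume us: "distinct us \<and> 3 \<le> length us \<and> set us \<subseteq> {..<n}"
  have "{us ! m, us ! cnext (length us) m} \<in> all_edges n" if "m < length us" for m
  proof -
    have "cnext (length us) m < length us" "cnext (length us) m \<noteq> m"
      using us that cnext_less cnext_neq by auto
    moreover have "us ! m < n" "us ! cnext (length us) m < n"
      using us that calculation(1) by (auto dest: nth_mem)
    ultimately show ?thesis
      using us that unfolding all_edges_def mem_Collect_eq
      by (intro exI[of _ "us ! m"] exI[of _ "us ! cnext (length us) m"]) (auto simp: nth_eq_iff_index_eq)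
  qed
  then show "is_cycle_list (all_edges n) us"
    unfolding is_cycle_list_def cyc_edges_eq_image using us by auto
qed

lemma image_permutation_lessThan:
  assumes "\<sigma> ` {..<k} \<subseteq> {..<k}" "inj_on \<sigma> {..<(k::nat)}"
  shows "(\<lambda>m. f (\<sigma> m)) ` {..<k} = f ` {..<k}"
proof -
  have "\<sigma> ` {..<k} = {..<k}"
    using endo_inj_surj[OF _ assms] by simp
  then show ?thesis
    by (metis image_image)
qed

lemma cyc_edges_rotate:
  assumes "3 \<le> length us"
  shows "cyc_edges (rotate j us) = cyc_edges us"
proof -
  let ?k = "length us" and ?e = "\<lambda>t. {us ! t, us ! cnext (length us) t}"
  have e: "{rotate j us ! m, rotate j us ! cnext ?k m} = ?e ((j + m) mod ?k)" if "m < ?k" for m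
  proof -
    have "(j + cnext ?k m) mod ?k = cnext ?k ((j + m) mod ?k)"
      unfolding cnext_def by (simp add: mod_add_right_eq mod_add_left_eq add.assoc mod_Suc_eq)
    then show ?thesis
      using that cnext_less[OF assms] by (simp add: nth_rotate)
  qed
  have "inj_on (\<lambda>m. (j + m) mod ?k) {..<?k}"
  proof (rule inj_onI)
    fix x y
    assume xy: "x \<in> {..<?k}" "y \<in> {..<?k}" "(j + x) mod ?k = (j + y) mod ?k"
    then obtain q1 q2 where "j + x + ?k * q1 = j + y + ?k * q2"
      unfolding nat_mod_eq_iff by blast
    then have "x mod ?k = y mod ?k"
      unfolding nat_mod_eq_iff by auto
    then show "x = y"
      using xy by simp
  qed
  moreover have "0 < ?k"
    using assms by linarith
  ultimately have "(\<lambda>m. ?e ((j + m) mod ?k)) ` {..<?k} = ?e ` {..<?k}"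
    by (intro image_permutation_lessThan) auto
  moreover have "cyc_edges (rotate j us) = (\<lambda>m. ?e ((j + m) mod ?k)) ` {..<?k}"
    unfolding cyc_edges_eq_image length_rotate using e by (auto simp: image_iff)
  ultimately show ?thesis
    unfolding cyc_edges_eq_image by simp
qed

lemma cyc_edges_rev:
  assumes "3 \<le> length us"
  shows "cyc_edges (rev us) = cyc_edges us"
proof -
  let ?k = "length us" and ?e = "\<lambda>t. {us ! t, us ! cnext (length us) t}"
  let ?s = "\<lambda>m. ?k - 1 - cnext ?k m"
  have e: "{rev us ! m, rev us ! cnext ?k m} = ?e (?s m)" if m: "m < ?k" for m
  proof (cases "m + 1 < ?k")
    case True
    then have "cnext ?k m = m + 1" "cnext ?k (?k - 1 - (m + 1)) = ?k - 1 - m"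
      using m by (auto simp: cnext_eq)
    then show ?thesis
      using m True by (auto simp: rev_nth cnext_less[OF assms])
  next
    case False
    then have "cnext ?k m = 0" "m = ?k - 1" "cnext ?k (?k - 1) = 0"
      using m assms by (auto simp: cnext_eq)
    moreover have "rev us ! 0 = us ! (?k - 1)"
      using assms by (subst rev_nth) auto
    ultimately show ?thesis
      using m by (auto simp: rev_nth)
  qed
  have "inj_on ?s {..<?k}"
  proof (rule inj_onI)
    fix x y
    assume xy: "x \<in> {..<?k}" "y \<in> {..<?k}" "?s x = ?s y"
    have "cnext ?k x < ?k" "cnext ?k y < ?k"
      using cnext_less[OF assms] by auto
    then have "cnext ?k x = cnext ?k y"
      using xy(3) by simp
    then show "x = y"
      using cnext_inject[OF assms] xy by auto
  qed
  then have "(\<lambda>m. ?e (?s m)) ` {..<?k} = ?e ` {..<?k}"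
    by (intro image_permutation_lessThan) auto
  moreover have "cyc_edges (rev us) = (\<lambda>m. ?e (?s m)) ` {..<?k}"
    unfolding cyc_edges_eq_image length_rev using e by (auto simp: image_iff)
  ultimately show ?thesis
    unfolding cyc_edges_eq_image by simp
qed

lemma cyc_edges_neighbour:
  assumes "distinct us" "3 \<le> length us" "m < length us" "{us ! m, x} \<in> cyc_edges us"
  shows "x \<in> {us ! cnext (length us) m, us ! cprev (length us) m}"
proof -
  let ?k = "length us"
  obtain t where t: "t < ?k" "{us ! m, x} = {us ! t, us ! cnext ?k t}"
    using assms(4) unfolding cyc_edges_eq_image by auto
  have "cnext ?k t < ?k"
    using cnext_less[OF assms(2)] by simp
  with t assms(1,3) have "(m = t \<and> x = us ! cnext ?k t) \<or> (m = cnext ?k t \<and> x = us ! t)"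
    by (auto simp: doubleton_eq_iff nth_eq_iff_index_eq)
  then show ?thesis
    using cprev_cnext[OF assms(2) t(1)] by auto
qed

lemma funpow_cnext: "0 < k \<Longrightarrow> j < k \<Longrightarrow> (cnext k ^^ m) j = (j + m) mod k"
  by (induction m) (auto simp: cnext_def mod_Suc_eq)

lemma funpow_cprev:
  assumes "3 \<le> k" "j < k" "m < k"
  shows "(cprev k ^^ m) j = (cnext k j + (k - 1 - m)) mod k"
  using assms(3)
proof (induction m)
  case 0
  have "cnext k j + (k - 1) = cnext k j + k - 1"
    using assms by simp
  then show ?case
    using cprev_cnext[OF assms(1,2)] unfolding cprev_def by simp
next
  case (Suc m)
  then have "(cprev k ^^ m) j = (cnext k j + (k - 1 - m)) mod k"
    by simp
  then have "(cprev k ^^ Suc m) j = cprev k ((cnext k j + (k - 1 - m)) mod k)"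
    by simp
  also have "\<dots> = ((cnext k j + (k - 1 - m)) mod k + k - 1) mod k"
    by (simp only: cprev_def)
  also have "\<dots> = ((cnext k j + (k - 1 - m)) mod k + (k - 1)) mod k"
    using Suc by simp
  also have "\<dots> = (cnext k j + (k - 1 - m) + (k - 1)) mod k"
    by (simp add: mod_add_left_eq)
  also have "cnext k j + (k - 1 - m) + (k - 1) = (cnext k j + (k - 1 - Suc m)) + k"
    using Suc by simp
  finally show ?case by simp
qed

lemma nth_rev_rotate_cnext:
  assumes "3 \<le> length us" "j < length us" "m < length us"
  shows "rev (rotate (cnext (length us) j) us) ! m = us ! ((cprev (length us) ^^ m) j)"
  using assms funpow_cprev[OF assms]
  by (simp add: rev_nth nth_rotate Suc_diff_Suc)

lemma nth_0_rotate: "j < length us \<Longrightarrow> rotate j us ! 0 = us ! j"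
  by (cases us) (simp_all add: nth_rotate)

lemma nth_0_rev_rotate_cnext:
  "3 \<le> length us \<Longrightarrow> j < length us \<Longrightarrow> rev (rotate (cnext (length us) j) us) ! 0 = us ! j"
  using nth_rev_rotate_cnext[of us j 0] by (cases us) simp_all

lemma inj_on_lessThan_if_nth_0:
  assumes "distinct us" "\<And>j. j < length us \<Longrightarrow> f j ! 0 = us ! j"
  shows "inj_on f {..<length us}"
proof (rule inj_onI)
  fix x y
  assume xy: "x \<in> {..<length us}" "y \<in> {..<length us}" "f x = f y"
  then have "us ! x = us ! y"
    using assms(2)[of x] assms(2)[of y] by simp
  then show "x = y"
    using xy assms(1) by (simp add: nth_eq_iff_index_eq)
qed

lemma rotate_neq_rev_rotate_cnext:
  assumes "distinct us" "3 \<le> length us" "j < length us" "j' < length us"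
  shows "rotate j us \<noteq> rev (rotate (cnext (length us) j') us)"
proof
  let ?k = "length us"
  assume eq: "rotate j us = rev (rotate (cnext ?k j') us)"
  \<comment> \<open>both lists start at the same vertex, but leave it in opposite directions\<close>
  have "us ! j = rotate j us ! 0"
    using nth_0_rotate[OF assms(3)] by simp
  also have "\<dots> = us ! j'"
    unfolding eq by (rule nth_0_rev_rotate_cnext[OF assms(2,4)])
  finally have "j = j'"
    using assms by (simp add: nth_eq_iff_index_eq)
  have "us ! cnext ?k j = rotate j us ! 1"
    using assms(2,3) by (simp add: nth_rotate cnext_def)
  also have "\<dots> = us ! cprev ?k j'"
    unfolding eq using nth_rev_rotate_cnext[OF assms(2,4), of 1] assms(2) by simp
  finally have "cnext ?k j = cprev ?k j'"
    using assms cnext_less[OF assms(2)] cprev_less[OF assms(2)] by (simp add: nth_eq_iff_index_eq)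
  with \<open>j = j'\<close> show False
    using cprev_neq_cnext[OF assms(2,3)] by simp
qed

text \<open>A list ws that starts at us ! j, takes its second vertex along f, and always continues
  to a neighbour other than the one it came from, runs through us along f.\<close>
lemma nth_walk_eq_funpow:
  assumes f: "\<And>t. t < k \<Longrightarrow> f t < k" and g_f: "\<And>t. t < k \<Longrightarrow> g (f t) = t"
    and start: "j < k" "ws ! 0 = us ! j" "ws ! 1 = us ! f j"
    and step: "\<And>m t. Suc (Suc m) < length ws \<Longrightarrow> t < k \<Longrightarrow> ws ! Suc m = us ! t \<Longrightarrow>
      ws ! Suc (Suc m) \<in> {us ! f t, us ! g t} \<and> ws ! Suc (Suc m) \<noteq> ws ! m"
  shows "m < length ws \<Longrightarrow> ws ! m = us ! ((f ^^ m) j)"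
proof -
  have less: "(f ^^ m) j < k" for m
    using start(1) f by (induction m) auto
  have "Suc m < length ws \<longrightarrow> ws ! m = us ! ((f ^^ m) j) \<and> ws ! Suc m = us ! ((f ^^ Suc m) j)" for m
  proof (induction m)
    case 0
    then show ?case using start by simp
  next
    case (Suc m)
    show ?case
    proof
      assume m: "Suc (Suc m) < length ws"
      let ?t = "(f ^^ Suc m) j"
      have cur: "ws ! Suc m = us ! ?t"
        using Suc m by simp
      have "ws ! m = us ! g ?t"
        using Suc m g_f[OF less[of m]] by simp
      then have "ws ! Suc (Suc m) = us ! f ?t"
        using step[OF m less cur] by auto
      then show "ws ! Suc m = us ! ?t \<and> ws ! Suc (Suc m) = us ! ((f ^^ Suc (Suc m)) j)"
        using cur by simp
    qed
  qed
  then show "m < length ws \<Longrightarrow> ws ! m = us ! ((f ^^ m) j)"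
    using start by (cases m) auto
qed

lemma cyc_edges_eq_imp_rotate_or_rev:
  assumes us: "distinct us" "3 \<le> length us" and ws: "distinct ws" "3 \<le> length ws"
    and e: "cyc_edges ws = cyc_edges us"
  shows "\<exists>j<length us. ws = rotate j us \<or> ws = rev (rotate (cnext (length us) j) us)"
proof -
  let ?k = "length us"
  have len: "length ws = ?k"
    using card_cyc_edges[OF us] card_cyc_edges[OF ws] e by simp
  have edge: "{ws ! m, ws ! Suc m} \<in> cyc_edges us" if "Suc m < ?k" for m
  proof -
    have "{ws ! m, ws ! cnext ?k m} \<in> cyc_edges ws"
      using that len unfolding cyc_edges_eq_image by auto
    then show ?thesis
      using that e cnext_eq[of m ?k] by simp
  qed
  have "ws ! 0 \<in> set ws"
    using ws(2) by (intro nth_mem) linarith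
  then have "ws ! 0 \<in> set us"
    using Union_cyc_edges[OF us(2)] Union_cyc_edges[OF ws(2)] e by simp
  then obtain j where j: "j < ?k" "ws ! 0 = us ! j"
    by (auto simp: in_set_conv_nth)
  have step: "ws ! Suc (Suc m) \<in> {us ! cnext ?k t, us ! cprev ?k t} \<and> ws ! Suc (Suc m) \<noteq> ws ! m"
    if "Suc (Suc m) < length ws" "t < ?k" "ws ! Suc m = us ! t" for m t
    using cyc_edges_neighbour[OF us that(2)] edge[of "Suc m"] that ws(1) len
    by (simp add: nth_eq_iff_index_eq)
  have k0: "0 < ?k"
    using us(2) by linarith
  have "ws ! 1 = us ! cnext ?k j \<or> ws ! 1 = us ! cprev ?k j"
    using cyc_edges_neighbour[OF us j(1)] edge[of 0] j us(2) by simp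
  then show ?thesis
  proof
    assume w1: "ws ! 1 = us ! cnext ?k j"
    have walk: "ws ! m = us ! ((cnext ?k ^^ m) j)" if "m < length ws" for m
      by (rule nth_walk_eq_funpow[of ?k "cnext ?k" "cprev ?k"])
        (use cnext_less[OF us(2)] cprev_cnext[OF us(2)] j w1 step that in auto)
    have "ws = rotate j us"
    proof (rule nth_equalityI)
      fix m
      assume "m < length ws"
      then show "ws ! m = rotate j us ! m"
        using walk len funpow_cnext[OF k0 j(1)] by (simp add: nth_rotate)
    qed (simp add: len)
    then show ?thesis using j by auto
  next
    assume w1: "ws ! 1 = us ! cprev ?k j"
    have walk: "ws ! m = us ! ((cprev ?k ^^ m) j)" if "m < length ws" for m
      by (rule nth_walk_eq_funpow[of ?k "cprev ?k" "cnext ?k"])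
        (use cprev_less[OF us(2)] cnext_cprev[OF us(2)] j w1 step that in auto)
    have "ws = rev (rotate (cnext ?k j) us)"
    proof (rule nth_equalityI)
      fix m
      assume "m < length ws"
      then show "ws ! m = rev (rotate (cnext ?k j) us) ! m"
        using walk len nth_rev_rotate_cnext[OF us(2) j(1)] by simp
    qed (simp add: len)
    then show ?thesis using j by auto
  qed
qed

definition distinct_lists :: "nat \<Rightarrow> nat list set" where
  "distinct_lists n = {xs. distinct xs \<and> set xs \<subseteq> {..<n}}"

definition cycle_lists :: "nat \<Rightarrow> nat list set" where
  "cycle_lists n = {vs. distinct vs \<and> 3 \<le> length vs \<and> set vs \<subseteq> {..<n}}"

lemma length_le_if_in_distinct_lists: "xs \<in> distinct_lists n \<Longrightarrow> length xs \<le> n"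
  unfolding distinct_lists_def
  by (metis (mono_tags) card_lessThan card_mono distinct_card finite_lessThan mem_Collect_eq)

lemma finite_distinct_lists: "finite (distinct_lists n)"
proof (rule finite_subset)
  show "distinct_lists n \<subseteq> {xs. set xs \<subseteq> {..<n} \<and> length xs \<le> n}"
    using length_le_if_in_distinct_lists unfolding distinct_lists_def by auto
qed (rule finite_lists_length_le, simp)

lemma finite_cycle_lists: "finite (cycle_lists n)"
  by (rule finite_subset[OF _ finite_distinct_lists]) (auto simp: cycle_lists_def distinct_lists_def)

lemma card_distinct_lists_length:
  assumes "i \<le> n"
  shows "real (card {xs \<in> distinct_lists n. length xs = i}) = fact n / fact (n - i)"
proof -
  have "{xs \<in> distinct_lists n. length xs = i} = {xs. length xs = i \<and> distinct xs \<and> set xs \<subseteq> {..<n}}"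
    unfolding distinct_lists_def by auto
  then have "card {xs \<in> distinct_lists n. length xs = i} = fact n div fact (n - i)"
    using card_lists_distinct_length_eq[of "{..<n}" i] fact_div_fact[of "n - i" n] assms by simp
  then show ?thesis
    by (simp add: real_of_nat_div fact_dvd)
qed

lemma cycles_all_edges: "cycles (all_edges n) = cyc_edges ` cycle_lists n"
  unfolding cycles_def cycle_lists_def is_cycle_list_all_edges_iff by auto

lemma finite_cycles_all_edges: "finite (cycles (all_edges n))"
  unfolding cycles_all_edges using finite_cycle_lists by simp

text \<open>Each cycle of length k is represented by exactly 2k vertex lists: k rotations for each
  of the two orientations.\<close>
lemma card_cycle_lists_same_cycle:
  assumes "us \<in> cycle_lists n"
  shows "card {ws \<in> cycle_lists n. cyc_edges ws = cyc_edges us} = 2 * length us"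
proof -
  let ?k = "length us"
  have us: "distinct us" "3 \<le> ?k" "set us \<subseteq> {..<n}"
    using assms unfolding cycle_lists_def by auto
  define R where "R = (\<lambda>j. rotate j us) ` {..<?k}"
  define V where "V = (\<lambda>j. rev (rotate (cnext ?k j) us)) ` {..<?k}"
  have eq: "{ws \<in> cycle_lists n. cyc_edges ws = cyc_edges us} = R \<union> V"
  proof
    show "{ws \<in> cycle_lists n. cyc_edges ws = cyc_edges us} \<subseteq> R \<union> V"
      using cyc_edges_eq_imp_rotate_or_rev[OF us(1,2)]
      unfolding R_def V_def cycle_lists_def by blast
    show "R \<union> V \<subseteq> {ws \<in> cycle_lists n. cyc_edges ws = cyc_edges us}"
      unfolding R_def V_def cycle_lists_def using us cyc_edges_rotate[OF us(2)] cyc_edges_rev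
      by (auto simp: distinct_rotate)
  qed
  moreover have "inj_on (\<lambda>j. rotate j us) {..<?k}"
    by (rule inj_on_lessThan_if_nth_0[OF us(1)]) (rule nth_0_rotate)
  moreover have "inj_on (\<lambda>j. rev (rotate (cnext ?k j) us)) {..<?k}"
    by (rule inj_on_lessThan_if_nth_0[OF us(1)]) (rule nth_0_rev_rotate_cnext[OF us(2)])
  ultimately have "card R = ?k" "card V = ?k"
    unfolding R_def V_def by (simp_all add: card_image)
  moreover have "R \<inter> V = {}"
    unfolding R_def V_def using rotate_neq_rev_rotate_cnext[OF us(1,2)] by auto
  ultimately show ?thesis
    unfolding eq by (simp add: card_Un_disjoint R_def V_def)
qed

lemma sum_cycles_all_edges:
  "(\<Sum>C\<in>cycles (all_edges n). g C) = (\<Sum>vs\<in>cycle_lists n. g (cyc_edges vs) / (2 * length vs))"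
proof -
  have "(\<Sum>vs\<in>cycle_lists n. g (cyc_edges vs) / (2 * length vs))
     = (\<Sum>C\<in>cyc_edges ` cycle_lists n. \<Sum>vs\<in>{ws \<in> cycle_lists n. cyc_edges ws = C}.
          g (cyc_edges vs) / (2 * length vs))"
    by (rule sum.image_gen[OF finite_cycle_lists])
  also have "\<dots> = (\<Sum>C\<in>cyc_edges ` cycle_lists n. g C)"
  proof (rule sum.cong[OF refl])
    fix C
    assume "C \<in> cyc_edges ` cycle_lists n"
    then obtain us where us: "us \<in> cycle_lists n" "C = cyc_edges us" by auto
    have "length vs = length us" if "vs \<in> cycle_lists n" "cyc_edges vs = C" for vs
      using that us card_cyc_edges unfolding cycle_lists_def by (metis (mono_tags) mem_Collect_eq)
    then have "(\<Sum>vs\<in>{ws \<in> cycle_lists n. cyc_edges ws = C}. g (cyc_edges vs) / (2 * length vs))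
        = card {ws \<in> cycle_lists n. cyc_edges ws = C} * (g C / (2 * length us))"
      by simp
    also have "\<dots> = g C"
      using card_cycle_lists_same_cycle[OF us(1)] us(1,2) by (auto simp: cycle_lists_def)
    finally show "(\<Sum>vs\<in>{ws \<in> cycle_lists n. cyc_edges ws = C}. g (cyc_edges vs) / (2 * length vs))
        = g C" .
  qed
  finally show ?thesis
    unfolding cycles_all_edges by simp
qed

lemma disj_cycle_pairs_all_edges:
  "disj_cycle_pairs (all_edges n)
    = {x \<in> cycles (all_edges n) \<times> cycles (all_edges n). \<Union>(fst x) \<inter> \<Union>(snd x) = {}}"
  unfolding disj_cycle_pairs_def
  by (rule set_eqI, simp only: mem_Collect_eq mem_Times_iff case_prod_beta, blast)

lemma finite_disj_cycle_pairs_all_edges: "finite (disj_cycle_pairs (all_edges n))"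
  unfolding disj_cycle_pairs_all_edges using finite_cycles_all_edges by simp

lemma sum_disj_cycle_pairs_all_edges:
  "(\<Sum>(C, C')\<in>disj_cycle_pairs (all_edges n). f C C') =
   (\<Sum>vs\<in>cycle_lists n. \<Sum>ws\<in>cycle_lists n. if set vs \<inter> set ws = {}
      then f (cyc_edges vs) (cyc_edges ws) / (2 * length vs) / (2 * length ws) else 0)"
proof -
  let ?X = "cycles (all_edges n)"
  let ?h = "\<lambda>C C'. if \<Union>C \<inter> \<Union>C' = {} then f C C' else 0"
  have "(\<Sum>(C, C')\<in>disj_cycle_pairs (all_edges n). f C C') = (\<Sum>C\<in>?X. \<Sum>C'\<in>?X. ?h C C')"
    unfolding disj_cycle_pairs_all_edges
    by (simp add: sum.inter_filter finite_cycles_all_edges sum.cartesian_product case_prod_beta)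
  also have "\<dots> = (\<Sum>vs\<in>cycle_lists n. \<Sum>ws\<in>cycle_lists n.
      ?h (cyc_edges vs) (cyc_edges ws) / (2 * length ws) / (2 * length vs))"
    by (simp add: sum_cycles_all_edges sum_divide_distrib)
  also have "\<dots> = (\<Sum>vs\<in>cycle_lists n. \<Sum>ws\<in>cycle_lists n. if set vs \<inter> set ws = {}
      then f (cyc_edges vs) (cyc_edges ws) / (2 * length vs) / (2 * length ws) else 0)"
    by (intro sum.cong refl) (auto simp: cycle_lists_def Union_cyc_edges)
  finally show ?thesis .
qed

lemma bij_betw_append_disjoint_cycle_lists:
  "bij_betw (\<lambda>(vs, ws). (vs @ ws, length vs))
    {(vs, ws) \<in> cycle_lists n \<times> cycle_lists n. set vs \<inter> set ws = {}}
    (SIGMA xs:distinct_lists n. {3..length xs - 3})"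
proof (rule bij_betw_imageI)
  show "inj_on (\<lambda>(vs, ws). (vs @ ws, length vs))
      {(vs, ws) \<in> cycle_lists n \<times> cycle_lists n. set vs \<inter> set ws = {}}"
    by (rule inj_onI) (auto simp: append_eq_append_conv)
  show "(\<lambda>(vs, ws). (vs @ ws, length vs)) ` {(vs, ws) \<in> cycle_lists n \<times> cycle_lists n. set vs \<inter> set ws = {}}
      = (SIGMA xs:distinct_lists n. {3..length xs - 3})"
  proof
    show "(\<lambda>(vs, ws). (vs @ ws, length vs)) ` {(vs, ws) \<in> cycle_lists n \<times> cycle_lists n. set vs \<inter> set ws = {}}
        \<subseteq> (SIGMA xs:distinct_lists n. {3..length xs - 3})"
      unfolding cycle_lists_def distinct_lists_def by auto
  next
    show "(SIGMA xs:distinct_lists n. {3..length xs - 3})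
        \<subseteq> (\<lambda>(vs, ws). (vs @ ws, length vs)) ` {(vs, ws) \<in> cycle_lists n \<times> cycle_lists n. set vs \<inter> set ws = {}}"
    proof clarify
      fix xs a
      assume "xs \<in> distinct_lists n" "a \<in> {3..length xs - 3}"
      then have "(take a xs, drop a xs) \<in> {(vs, ws) \<in> cycle_lists n \<times> cycle_lists n. set vs \<inter> set ws = {}}"
        "(xs, a) = (take a xs @ drop a xs, length (take a xs))"
        unfolding cycle_lists_def distinct_lists_def
        by (auto simp: set_take_disj_set_drop_if_distinct dest: in_set_takeD in_set_dropD)
      then show "(xs, a) \<in> (\<lambda>(vs, ws). (vs @ ws, length vs)) ` {(vs, ws) \<in> cycle_lists n \<times> cycle_lists n. set vs \<inter> set ws = {}}"
        by (metis (no_types, lifting) case_prod_conv image_eqI)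
    qed
  qed
qed

lemma sum_disjoint_cycle_lists_pairs:
  fixes p :: real
  shows "(\<Sum>vs\<in>cycle_lists n. \<Sum>ws\<in>cycle_lists n. if set vs \<inter> set ws = {} then p ^ (length vs + length ws) else 0)
    = (\<Sum>i = 6..n. p ^ i * (fact n / fact (n - i)) * (real i - 5))"
proof -
  let ?P = "{(vs, ws) \<in> cycle_lists n \<times> cycle_lists n. set vs \<inter> set ws = {}}"
  have "(\<Sum>vs\<in>cycle_lists n. \<Sum>ws\<in>cycle_lists n. if set vs \<inter> set ws = {} then p ^ (length vs + length ws) else 0)
      = (\<Sum>(vs, ws)\<in>?P. p ^ length (vs @ ws))"
    unfolding sum.cartesian_product
    by (rule sum.mono_neutral_cong_right) (auto simp: finite_cycle_lists split: if_splits)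
  also have "\<dots> = (\<Sum>(xs, a)\<in>(SIGMA xs:distinct_lists n. {3..length xs - 3}). p ^ length xs)"
    using sum.reindex_bij_betw[OF bij_betw_append_disjoint_cycle_lists, of "\<lambda>(xs, a). p ^ length xs"]
    by (simp add: case_prod_beta)
  also have "\<dots> = (\<Sum>xs\<in>distinct_lists n. p ^ length xs * real (Suc (length xs - 3) - 3))"
    by (simp add: sum.Sigma[symmetric] finite_distinct_lists mult.commute)
  also have "\<dots> = (\<Sum>i\<le>n. \<Sum>xs\<in>{xs \<in> distinct_lists n. length xs = i}.
      p ^ length xs * real (Suc (length xs - 3) - 3))"
    by (rule sum.group[symmetric]) (auto simp: finite_distinct_lists length_le_if_in_distinct_lists)
  also have "\<dots> = (\<Sum>i\<le>n. real (card {xs \<in> distinct_lists n. length xs = i}) * (p ^ i * real (Suc (i - 3) - 3)))"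
    by (rule sum.cong[OF refl]) simp
  also have "\<dots> = (\<Sum>i\<le>n. p ^ i * (fact n / fact (n - i)) * real (Suc (i - 3) - 3))"
    by (simp add: card_distinct_lists_length mult_ac)
  also have "\<dots> = (\<Sum>i = 6..n. p ^ i * (fact n / fact (n - i)) * (real i - 5))"
  proof (rule sum.mono_neutral_cong_right)
    show "\<forall>i\<in>{..n} - {6..n}. p ^ i * (fact n / fact (n - i)) * real (Suc (i - 3) - 3) = 0"
      by auto
    show "p ^ i * (fact n / fact (n - i)) * real (Suc (i - 3) - 3)
        = p ^ i * (fact n / fact (n - i)) * (real i - 5)" if "i \<in> {6..n}" for i
      using that by (simp add: of_nat_diff)
  qed auto
  finally show ?thesis .
qed

lemma sum_Pow_binomial:
  fixes p q :: "'a::comm_semiring_1"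
  assumes "finite S"
  shows "(\<Sum>K\<in>Pow S. p ^ card K * q ^ card (S - K)) = (p + q) ^ card S"
  using prod_add[OF assms, of "\<lambda>_. p" "\<lambda>_. q"] by simp

text \<open>The probability that the random graph contains a given edge set H.\<close>
lemma sum_Pow_supersets:
  fixes p :: real
  assumes "finite E" "H \<subseteq> E"
  shows "(\<Sum>G\<in>Pow E. if H \<subseteq> G then p ^ card G * (1 - p) ^ (card E - card G) else 0) = p ^ card H"
proof -
  have fin: "finite H" "finite (E - H)"
    using assms finite_subset by auto
  let ?w = "\<lambda>G. p ^ card G * (1 - p) ^ (card E - card G)"
  have bij: "bij_betw ((\<union>) H) (Pow (E - H)) {G \<in> Pow E. H \<subseteq> G}"
    using assms by (intro bij_betw_imageI) (auto simp: inj_on_def image_def intro!: exI[of _ "_ - H"])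
  have "(\<Sum>G\<in>Pow E. if H \<subseteq> G then ?w G else 0) = (\<Sum>G\<in>{G \<in> Pow E. H \<subseteq> G}. ?w G)"
    by (rule sum.inter_filter[symmetric]) (simp add: assms(1))
  also have "\<dots> = (\<Sum>K\<in>Pow (E - H). ?w (H \<union> K))"
    by (rule sum.reindex_bij_betw[OF bij, symmetric])
  also have "\<dots> = (\<Sum>K\<in>Pow (E - H). p ^ card H * (p ^ card K * (1 - p) ^ card ((E - H) - K)))"
  proof (rule sum.cong[OF refl])
    fix K
    assume K: "K \<in> Pow (E - H)"
    then have "finite K" "card (H \<union> K) = card H + card K"
      using fin finite_subset by (auto intro!: card_Un_disjoint)
    moreover have "card E - card (H \<union> K) = card ((E - H) - K)"
      using K assms by (subst card_Diff_subset[symmetric]) (auto intro: finite_subset arg_cong[where f = card])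
    ultimately show "p ^ card (H \<union> K) * (1 - p) ^ (card E - card (H \<union> K))
        = p ^ card H * (p ^ card K * (1 - p) ^ card ((E - H) - K))"
      by (simp add: power_add)
  qed
  also have "\<dots> = p ^ card H"
    by (simp add: sum_distrib_left[symmetric] sum_Pow_binomial fin)
  finally show ?thesis .
qed

text \<open>Linearity of expectation over a random subset G of E containing each element with
  probability p.\<close>
lemma sum_Pow_weighted_sum_contained:
  fixes p :: real and h :: "'b \<Rightarrow> real"
  assumes "finite E" "finite D" "\<And>x. x \<in> D \<Longrightarrow> S x \<subseteq> E"
  shows "(\<Sum>G\<in>Pow E. p ^ card G * (1 - p) ^ (card E - card G) * (\<Sum>x\<in>{x \<in> D. S x \<subseteq> G}. h x))
    = (\<Sum>x\<in>D. p ^ card (S x) * h x)"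
proof -
  let ?w = "\<lambda>G. p ^ card G * (1 - p) ^ (card E - card G)"
  have "(\<Sum>G\<in>Pow E. ?w G * (\<Sum>x\<in>{x \<in> D. S x \<subseteq> G}. h x))
      = (\<Sum>G\<in>Pow E. \<Sum>x\<in>D. if S x \<subseteq> G then ?w G * h x else 0)"
    using assms(2) by (simp add: sum.inter_filter sum_distrib_left if_distrib cong: if_cong)
  also have "\<dots> = (\<Sum>x\<in>D. \<Sum>G\<in>Pow E. if S x \<subseteq> G then ?w G * h x else 0)"
    by (rule sum.swap)
  also have "\<dots> = (\<Sum>x\<in>D. (\<Sum>G\<in>Pow E. if S x \<subseteq> G then ?w G else 0) * h x)"
    unfolding sum_distrib_right by (intro sum.cong refl) auto
  also have "\<dots> = (\<Sum>x\<in>D. p ^ card (S x) * h x)"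
    using assms(1,3) by (intro sum.cong refl) (simp add: sum_Pow_supersets)
  finally show ?thesis .
qed

lemma finite_all_edges: "finite (all_edges n)"
  by (rule finite_subset[of _ "Pow {..<n}"]) (auto simp: all_edges_def)

lemma orient_cycle:
  assumes "C \<in> cycles (all_edges n)"
  shows "orient C \<in> cycle_lists n" "cyc_edges (orient C) = C" "length (orient C) = card C"
proof -
  obtain us where us: "us \<in> cycle_lists n" "C = cyc_edges us"
    using assms unfolding cycles_all_edges by auto
  then have "\<exists>vs. length vs \<ge> 3 \<and> distinct vs \<and> cyc_edges vs = C"
    unfolding cycle_lists_def by auto
  then have o: "length (orient C) \<ge> 3" "distinct (orient C)" "cyc_edges (orient C) = C"
    unfolding orient_def by (metis (mono_tags, lifting) someI_ex)+
  have "set (orient C) = set us"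
    using Union_cyc_edges o us unfolding cycle_lists_def by (metis mem_Collect_eq)
  then show "orient C \<in> cycle_lists n"
    using o us unfolding cycle_lists_def by auto
  show "cyc_edges (orient C) = C" by (rule o(3))
  show "length (orient C) = card C"
    using card_cyc_edges o by metis
qed

lemma disjoint_cycle_lists_orient:
  assumes "(C, C') \<in> disj_cycle_pairs (all_edges n)"
  shows "disjoint_cycle_lists n (orient C) (orient C')"
proof -
  have C: "C \<in> cycles (all_edges n)" "C' \<in> cycles (all_edges n)" "\<Union>C \<inter> \<Union>C' = {}"
    using assms unfolding disj_cycle_pairs_def by auto
  have "set (orient C) = \<Union>C" "set (orient C') = \<Union>C'"
    using orient_cycle[OF C(1)] orient_cycle[OF C(2)] Union_cyc_edges
    unfolding cycle_lists_def by (metis mem_Collect_eq)+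
  then show ?thesis
    using orient_cycle(1)[OF C(1)] orient_cycle(1)[OF C(2)] C(3)
    unfolding cycle_lists_def by unfold_locales auto
qed

lemma integral_lk_squared:
  assumes "(C, C') \<in> disj_cycle_pairs (all_edges n)"
  shows "(\<integral>\<omega>. (lk \<omega> C C')\<^sup>2 \<partial>cube_PiM {..<n}) = const_q / 2 * card C * card C'"
proof -
  have "C \<in> cycles (all_edges n)" "C' \<in> cycles (all_edges n)"
    using assms unfolding disj_cycle_pairs_def by auto
  then show ?thesis
    using disjoint_cycle_lists.integral_lk_list_squared[OF disjoint_cycle_lists_orient[OF assms]]
    unfolding lk_def by (simp add: orient_cycle(3))
qed

lemma disj_cycle_pairs_subgraph:
  assumes "G \<subseteq> all_edges n"
  shows "disj_cycle_pairs G = {x \<in> disj_cycle_pairs (all_edges n). fst x \<union> snd x \<subseteq> G}"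
proof -
  have "cycles G = {C \<in> cycles (all_edges n). C \<subseteq> G}"
    using assms unfolding cycles_def is_cycle_list_def by auto
  then show ?thesis
    unfolding disj_cycle_pairs_def by auto
qed

lemma integral_sum_sq_lk:
  assumes "G \<subseteq> all_edges n"
  shows "(\<integral>\<omega>. sum_sq_lk G \<omega> \<partial>cube_PiM {..<n})
    = const_q / 4 * (\<Sum>(C, C')\<in>disj_cycle_pairs G. real (card C) * real (card C'))"
proof -
  have sub: "disj_cycle_pairs G \<subseteq> disj_cycle_pairs (all_edges n)"
    using disj_cycle_pairs_subgraph[OF assms] by auto
  have "(\<integral>\<omega>. sum_sq_lk G \<omega> \<partial>cube_PiM {..<n})
      = 1/2 * (\<Sum>(C, C')\<in>disj_cycle_pairs G. \<integral>\<omega>. (lk \<omega> C C')\<^sup>2 \<partial>cube_PiM {..<n})"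
    unfolding sum_sq_lk_def lk_def case_prod_beta
    by (simp add: Bochner_Integration.integral_sum integrable_lk_list_squared)
  also have "\<dots> = 1/2 * (\<Sum>(C, C')\<in>disj_cycle_pairs G. const_q / 2 * card C * card C')"
    using sub integral_lk_squared by (auto intro!: sum.cong)
  finally show ?thesis
    by (simp add: sum_distrib_left case_prod_beta mult_ac)
qed

lemma card_Un_disj_cycle_pair:
  assumes "(C, C') \<in> disj_cycle_pairs (all_edges n)"
  shows "card (C \<union> C') = card C + card C'"
proof -
  have C: "C \<subseteq> all_edges n" "C' \<subseteq> all_edges n" "\<Union>C \<inter> \<Union>C' = {}"
    using assms unfolding disj_cycle_pairs_def cycles_def is_cycle_list_def by auto
  \<comment> \<open>edges are nonempty, so vertex-disjoint cycles are edge-disjoint\<close>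
  then have "C \<inter> C' = {}"
    unfolding all_edges_def by blast
  then show ?thesis
    using C finite_subset[OF _ finite_all_edges] by (simp add: card_Un_disjoint)
qed

lemma mean_sum_sq_lk_eq_sum_disj_cycle_pairs:
  "mean_sum_sq_lk n p = const_q / 4 * (\<Sum>(C, C')\<in>disj_cycle_pairs (all_edges n).
     p ^ (card C + card C') * (real (card C) * real (card C')))"
proof -
  let ?E = "all_edges n" and ?D = "disj_cycle_pairs (all_edges n)"
  let ?h = "\<lambda>x :: nat set set \<times> nat set set. real (card (fst x)) * real (card (snd x))"
  have "mean_sum_sq_lk n p = (\<Sum>G\<in>Pow ?E. p ^ card G * (1 - p) ^ (card ?E - card G)
      * (const_q / 4 * (\<Sum>x\<in>{x \<in> ?D. fst x \<union> snd x \<subseteq> G}. ?h x)))"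
    unfolding mean_sum_sq_lk_def
    by (intro sum.cong refl) (simp add: integral_sum_sq_lk disj_cycle_pairs_subgraph case_prod_beta)
  also have "\<dots> = const_q / 4 * (\<Sum>G\<in>Pow ?E.
      p ^ card G * (1 - p) ^ (card ?E - card G) * (\<Sum>x\<in>{x \<in> ?D. fst x \<union> snd x \<subseteq> G}. ?h x))"
    by (simp add: sum_distrib_left mult_ac)
  also have "\<dots> = const_q / 4 * (\<Sum>x\<in>?D. p ^ card (fst x \<union> snd x) * ?h x)"
    using finite_all_edges finite_disj_cycle_pairs_all_edges
    by (subst sum_Pow_weighted_sum_contained)
      (auto simp: disj_cycle_pairs_def cycles_def is_cycle_list_def)
  finally show ?thesis
    by (simp add: card_Un_disj_cycle_pair case_prod_beta cong: sum.cong)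
qed

lemma sum_disj_cycle_pairs_weights:
  "(\<Sum>(C, C')\<in>disj_cycle_pairs (all_edges n). p ^ (card C + card C') * (real (card C) * real (card C')))
    = 1/4 * (\<Sum>vs\<in>cycle_lists n. \<Sum>ws\<in>cycle_lists n.
        if set vs \<inter> set ws = {} then p ^ (length vs + length ws) else 0)"
  unfolding sum_disj_cycle_pairs_all_edges sum_distrib_left
  by (intro sum.cong refl) (auto simp: cycle_lists_def card_cyc_edges)

text \<open>The identity holds for all n and p.\<close>

theorem mainTheorem7:
  fixes n :: nat and p :: real
  assumes "n \<ge> 6" and "0 < p" and "p < 1"
  shows "mean_sum_sq_lk n p =
    const_q / 16 * (\<Sum>i = 6..n. p ^ i * (fact n / fact (n - i)) * (real i - 5))"
  unfolding mean_sum_sq_lk_eq_sum_disj_cycle_pairs sum_disj_cycle_pairs_weights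
    sum_disjoint_cycle_lists_pairs
  by simp

end
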